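(* For all $\omega,\omega_1,\omega_2\in\Omega$ (with $\omega_1\in\Omega_j$, $\omega_2\in\Omega_k$): (a) $\omega'=c\circ\omega\circ\neg$, where $c\colon\{0,1\}\to\{0,1\}$ is complementation and $\neg$ is the negation of the algebra $\mathbf M_\ell$ on which $\omega$ is defined; (b) $(\omega_2,\omega_1)^{-1}(\le)=\neg\big(((\omega_1',\omega_2')^{-1}(\le))^{\smile}\big)$; (c) $\mathcal R_{\omega_2\omega_1}=\{R^{\smile}\mid R\in\mathcal R_{\omega_1'\omega_2'}\}$.
   Context: Fix an integer $n\ge1$; $[m,p]=\{i\in\mathbb Z:m\le i\le p\}$. Algebras have signature $(\otimes,\oplus,\wedge,\vee,\neg,\top,\mathbf f_0,\dots,\mathbf f_n,\mathbf t_0,\dots,\mathbf t_n,\bot)$. $\mathbf M_0$ has universe $\{\top^0,\mathbf f^0,\mathbf t^0,\bot^0\}$, knowledge order $\bot^0<\mathbf f^0,\mathbf t^0<\top^0$ ($\mathbf f^0,\mathbf t^0$ incomparable), truth order $\mathbf f^0<\top^0,\bot^0<\mathbf t^0$ ($\top^0,\bot^0$ incomparable); $\otimes,\oplus$ are meet/join in the knowledge order, $\wedge,\vee$ meet/join in the truth order; $\neg$ swaps $\mathbf f^0,\mathbf t^0$ and fixes $\top^0,\bot^0$; $\top,\bot$ name $\top^0,\bot^0$, all $\mathbf f_i$ name $\mathbf f^0$, all $\mathbf t_i$ name $\mathbf t^0$. For $k\in[1,n]$, $\mathbf M_k$ has universe $\{\top^k,\bot^k,\mathbf f^k,\mathbf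 t^k,\mathbf 0^k,\mathbf 1^k\}$, knowledge order generated by $\bot^k<\mathbf f^k<\mathbf 0^k<\top^k$, $\bot^k<\mathbf t^k<\mathbf 1^k<\top^k$, truth order generated by $\mathbf 0^k<\mathbf f^k<\top^k<\mathbf t^k<\mathbf 1^k$, $\mathbf f^k<\bot^k<\mathbf t^k$; operations as for $\mathbf M_0$; $\neg$ swaps $\mathbf f^k\leftrightarrow\mathbf t^k$, $\mathbf 0^k\leftrightarrow\mathbf 1^k$ and fixes $\top^k,\bot^k$; $\top,\bot$ name $\top^k,\bot^k$; $\mathbf f_i$ names $\mathbf 0^k$ if $i<k$ and $\mathbf f^k$ if $i\ge k$; $\mathbf t_i$ names $\mathbf 1^k$ if $i<k$ and $\mathbf t^k$ if $i\ge k$. Carriers: $\delta_0,\gamma_0\colon M_0\to\{0,1\}$ with $\delta_0^{-1}(1)=\{\bot^0,\mathbf t^0\}$, $\gamma_0^{-1}(1)=\{\top^0,\mathbf t^0\}$; for $k\in[1,n]$, $\gamma_k,\delta_k\colon M_k\to\{0,1\}$ with $\gamma_k^{-1}(1)=\{\mathbf 1^k\}$, $\delta_k^{-1}(1)=\{\mathbf f^k,\bot^k,\top^k,\mathbf t^k,\mathbf 1^k\}$. $\Omega_k=\{\gamma_k,\delta_k\}$, $\Omega=\bigcup_{k\in[0,n]}\Omega_k$, and $'\colon\Omega\to\Omega$ is given by $\gamma_k'=\delta_k$, $\delta_k'=\gamma_k$. For $\omega_1\in\Omega_j$, $\omega_2\in\Omega_k$, $(\omega_1,\omega_2)^{-1}(\le)=\{(a,b)\in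 M_j\times M_k\mid\omega_1(a)\le\omega_2(b)\}$ (with $0\le1$ on $\{0,1\}$), and $\mathcal R_{\omega_1\omega_2}$ is the (possibly empty) set of subuniverses of the product algebra $\mathbf M_j\times\mathbf M_k$ that are maximal with respect to being contained in $(\omega_1,\omega_2)^{-1}(\le)$. For a binary relation $R$, $R^{\smile}$ is its converse; for a set $S$ of pairs, $\neg S=\{(\neg a,\neg b)\mid(a,b)\in S\}$. *)

theory Defs
  imports Main
begin

datatype el = Top | Bot | Fe | Te | Ze | On
  (* Top = top^k, Bot = bot^k, Fe = f^k, Te = t^k, Ze = 0^k, On = 1^k *)

datatype kind = Gam | Del

type_synonym carrier = "kind \<times> nat"

definition univ :: "nat \<Rightarrow> el set" where
  "univ k = (if k = 0 then {Top, Fe, Te, Bot} else UNIV)"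

definition kgen :: "nat \<Rightarrow> (el \<times> el) set" where
  "kgen k = (if k = 0 then {(Bot,Fe),(Bot,Te),(Fe,Top),(Te,Top)}
             else {(Bot,Fe),(Fe,Ze),(Ze,Top),(Bot,Te),(Te,On),(On,Top)})"

definition tgen :: "nat \<Rightarrow> (el \<times> el) set" where
  "tgen k = (if k = 0 then {(Fe,Top),(Fe,Bot),(Top,Te),(Bot,Te)}
             else {(Ze,Fe),(Fe,Top),(Top,Te),(Te,On),(Fe,Bot),(Bot,Te)})"

definition kle :: "nat \<Rightarrow> (el \<times> el) set" where "kle k = (kgen k)\<^sup>*"
definition tle :: "nat \<Rightarrow> (el \<times> el) set" where "tle k = (tgen k)\<^sup>*"

definition meet_in :: "(el \<times> el) set \<Rightarrow> el set \<Rightarrow> el \<Rightarrow> el \<Rightarrow> el" where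
  "meet_in R A a b = (THE c. c \<in> A \<and> (c,a) \<in> R \<and> (c,b) \<in> R \<and>
       (\<forall>d\<in>A. (d,a) \<in> R \<and> (d,b) \<in> R \<longrightarrow> (d,c) \<in> R))"

definition join_in :: "(el \<times> el) set \<Rightarrow> el set \<Rightarrow> el \<Rightarrow> el \<Rightarrow> el" where
  "join_in R A a b = (THE c. c \<in> A \<and> (a,c) \<in> R \<and> (b,c) \<in> R \<and>
       (\<forall>d\<in>A. (a,d) \<in> R \<and> (b,d) \<in> R \<longrightarrow> (c,d) \<in> R))"

definition otimes :: "nat \<Rightarrow> el \<Rightarrow> el \<Rightarrow> el" where "otimes k = meet_in (kle k) (univ k)"
definition oplus :: "nat \<Rightarrow> el \<Rightarrow> el \<Rightarrow> el" where "oplus k = join_in (kle k) (univ k)"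
definition wedge :: "nat \<Rightarrow> el \<Rightarrow> el \<Rightarrow> el" where "wedge k = meet_in (tle k) (univ k)"
definition vee :: "nat \<Rightarrow> el \<Rightarrow> el \<Rightarrow> el" where "vee k = join_in (tle k) (univ k)"

fun neg :: "el \<Rightarrow> el" where
  "neg Fe = Te" | "neg Te = Fe" | "neg Ze = On" | "neg On = Ze" | "neg Top = Top" | "neg Bot = Bot"

definition cf :: "nat \<Rightarrow> nat \<Rightarrow> el" where "cf k i = (if i < k then Ze else Fe)"
definition ct :: "nat \<Rightarrow> nat \<Rightarrow> el" where "ct k i = (if i < k then On else Te)"

definition subuni :: "nat \<Rightarrow> nat \<Rightarrow> nat \<Rightarrow> (el \<times> el) set \<Rightarrow> bool" where
  "subuni n j k S \<longleftrightarrow> S \<subseteq> univ j \<times> univ k \<and>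
     (\<forall>(a,b)\<in>S. \<forall>(c,d)\<in>S.
        (otimes j a c, otimes k b d) \<in> S \<and> (oplus j a c, oplus k b d) \<in> S \<and>
        (wedge j a c, wedge k b d) \<in> S \<and> (vee j a c, vee k b d) \<in> S) \<and>
     (\<forall>(a,b)\<in>S. (neg a, neg b) \<in> S) \<and>
     (Top, Top) \<in> S \<and> (Bot, Bot) \<in> S \<and>
     (\<forall>i\<le>n. (cf j i, cf k i) \<in> S \<and> (ct j i, ct k i) \<in> S)"

definition idx :: "carrier \<Rightarrow> nat" where "idx \<omega> = snd \<omega>"

definition Omega :: "nat \<Rightarrow> carrier set" where "Omega n = {\<omega>. idx \<omega> \<le> n}"

fun carr :: "carrier \<Rightarrow> el \<Rightarrow> nat" where
  "carr (Gam, k) a = (if k = 0 then (if a \<in> {Top, Te} then 1 else 0)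
                      else (if a = On then 1 else 0))"
| "carr (Del, k) a = (if k = 0 then (if a \<in> {Bot, Te} then 1 else 0)
                      else (if a \<in> {Fe, Bot, Top, Te, On} then 1 else 0))"

fun swapk :: "kind \<Rightarrow> kind" where "swapk Gam = Del" | "swapk Del = Gam"

definition prime :: "carrier \<Rightarrow> carrier" where "prime \<omega> = (swapk (fst \<omega>), snd \<omega>)"

definition preim :: "carrier \<Rightarrow> carrier \<Rightarrow> (el \<times> el) set" where
  "preim \<omega>1 \<omega>2 = {(a,b). a \<in> univ (idx \<omega>1) \<and> b \<in> univ (idx \<omega>2) \<and> carr \<omega>1 a \<le> carr \<omega>2 b}"

definition Rset :: "nat \<Rightarrow> carrier \<Rightarrow> carrier \<Rightarrow> (el \<times> el) set set" where
  "Rset n \<omega>1 \<omega>2 = {S. subuni n (idx \<omega>1) (idx \<omega>2) S \<and> S \<subseteq> preim \<omega>1 \<omega>2 \<and>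
      (\<forall>S'. subuni n (idx \<omega>1) (idx \<omega>2) S' \<and> S' \<subseteq> preim \<omega>1 \<omega>2 \<and> S \<subseteq> S' \<longrightarrow> S' = S)}"

definition negset :: "(el \<times> el) set \<Rightarrow> (el \<times> el) set" where
  "negset S = (\<lambda>(a,b). (neg a, neg b)) ` S"

end

theory Submission
  imports Defs
begin

text \<open>Negation is an involution of each \<open>M\<^sub>k\<close> under which every carrier turns into
  the complement of its partner: \<open>\<omega>' = c \<circ> \<omega> \<circ> \<not>\<close>. Hence \<open>\<omega>\<^sub>2(y) \<le> \<omega>\<^sub>1(x)\<close> iff
  \<open>\<omega>\<^sub>1'(\<not>x) \<le> \<omega>\<^sub>2'(\<not>y)\<close>. Since subuniverses are closed under \<open>\<not>\<close> and transposing
  a subuniverse of \<open>M\<^sub>j \<times> M\<^sub>k\<close> gives one of \<open>M\<^sub>k \<times> M\<^sub>j\<close>, the converse map is an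
  inclusion-preserving bijection between the subuniverses contained in
  \<open>(\<omega>\<^sub>2,\<omega>\<^sub>1)\<^sup>-\<^sup>1(\<le>)\<close> and those contained in \<open>(\<omega>\<^sub>1',\<omega>\<^sub>2')\<^sup>-\<^sup>1(\<le>)\<close>, so it matches
  their maximal elements.\<close>

lemma neg_neg [simp]: "neg (neg a) = a"
  by (cases a) auto

lemma neg_in_univ_iff [simp]: "neg a \<in> univ k \<longleftrightarrow> a \<in> univ k"
  by (cases a) (auto simp: univ_def)

lemma idx_prime [simp]: "idx (prime \<omega>) = idx \<omega>"
  by (simp add: prime_def idx_def)

lemma carr_le_1: "carr \<omega> a \<le> 1"
  by (induction \<omega> a rule: carr.induct) auto

lemma carr_prime:
  assumes "a \<in> univ (idx \<omega>)"
  shows "carr (prime \<omega>) a = 1 - carr \<omega> (neg a)"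
proof (cases \<omega>)
  case (Pair \<kappa> k)
  with assms show ?thesis
    by (cases \<kappa>; cases a) (auto simp: prime_def univ_def idx_def split: if_splits)
qed

lemma mem_negset_iff [simp]: "(a, b) \<in> negset S \<longleftrightarrow> (neg a, neg b) \<in> S"
  by (force simp: negset_def image_iff)

lemma preim_eq_negset_converse_prime:
  "preim \<omega>2 \<omega>1 = negset ((preim (prime \<omega>1) (prime \<omega>2))\<inverse>)"
proof (rule set_eqI, clarify)
  fix y x
  have "carr \<omega>1 x \<le> 1" "carr \<omega>2 y \<le> 1"
    by (rule carr_le_1)+
  then show "(y, x) \<in> preim \<omega>2 \<omega>1 \<longleftrightarrow> (y, x) \<in> negset ((preim (prime \<omega>1) (prime \<omega>2))\<inverse>)"
    by (auto simp: preim_def carr_prime)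
qed

lemma subuni_converse: "subuni n j k S \<Longrightarrow> subuni n k j (S\<inverse>)"
  unfolding subuni_def by auto

lemma subuni_converse_iff: "subuni n k j (S\<inverse>) \<longleftrightarrow> subuni n j k S"
  using subuni_converse by fastforce

lemma subuni_neg: "subuni n j k S \<Longrightarrow> (a, b) \<in> S \<Longrightarrow> (neg a, neg b) \<in> S"
  unfolding subuni_def by fast

lemma subuni_subset_preim_iff_converse:
  assumes "subuni n (idx \<omega>2) (idx \<omega>1) S"
  shows "S \<subseteq> preim \<omega>2 \<omega>1 \<longleftrightarrow> S\<inverse> \<subseteq> preim (prime \<omega>1) (prime \<omega>2)"
  using subuni_neg [OF assms] neg_neg
  by (subst preim_eq_negset_converse_prime) fastforce

lemma maximal_converse:
  fixes P :: "('a \<times> 'b) set \<Rightarrow> bool" and Q :: "('b \<times> 'a) set \<Rightarrow> bool"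
  assumes "\<And>S. P S \<longleftrightarrow> Q (S\<inverse>)"
  shows "{S. P S \<and> (\<forall>S'. P S' \<and> S \<subseteq> S' \<longrightarrow> S' = S)}
       = converse ` {T. Q T \<and> (\<forall>T'. Q T' \<and> T \<subseteq> T' \<longrightarrow> T' = T)}"
proof -
  have maximal_iff: "(\<forall>S'. P S' \<and> S \<subseteq> S' \<longrightarrow> S' = S) \<longleftrightarrow>
        (\<forall>T'. Q T' \<and> S\<inverse> \<subseteq> T' \<longrightarrow> T' = S\<inverse>)" for S
  proof
    assume max: "\<forall>S'. P S' \<and> S \<subseteq> S' \<longrightarrow> S' = S"
    show "\<forall>T'. Q T' \<and> S\<inverse> \<subseteq> T' \<longrightarrow> T' = S\<inverse>"
    proof (intro allI impI)
      fix T' assume "Q T' \<and> S\<inverse> \<subseteq> T'"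
      then have "P (T'\<inverse>) \<and> S \<subseteq> T'\<inverse>"
        using assms converse_subset_swap by fastforce
      with max show "T' = S\<inverse>" by auto
    qed
  next
    assume max: "\<forall>T'. Q T' \<and> S\<inverse> \<subseteq> T' \<longrightarrow> T' = S\<inverse>"
    show "\<forall>S'. P S' \<and> S \<subseteq> S' \<longrightarrow> S' = S"
      using max assms by auto
  qed
  show ?thesis
  proof (rule set_eqI)
    fix S
    show "S \<in> {S. P S \<and> (\<forall>S'. P S' \<and> S \<subseteq> S' \<longrightarrow> S' = S)} \<longleftrightarrow>
          S \<in> converse ` {T. Q T \<and> (\<forall>T'. Q T' \<and> T \<subseteq> T' \<longrightarrow> T' = T)}"
      using assms maximal_iff [of S] by (simp add: image_iff) (metis converse_converse)
  qed
qed

lemma Rset_converse_prime: "Rset n \<omega>2 \<omega>1 = converse ` Rset n (prime \<omega>1) (prime \<omega>2)"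
proof -
  let ?P = "\<lambda>S. subuni n (idx \<omega>2) (idx \<omega>1) S \<and> S \<subseteq> preim \<omega>2 \<omega>1"
  let ?Q = "\<lambda>T. subuni n (idx (prime \<omega>1)) (idx (prime \<omega>2)) T \<and>
                T \<subseteq> preim (prime \<omega>1) (prime \<omega>2)"
  have "?P S \<longleftrightarrow> ?Q (S\<inverse>)" for S
    using subuni_subset_preim_iff_converse [of n \<omega>2 \<omega>1 S] subuni_converse_iff [of n "idx \<omega>1"]
    by auto
  from maximal_converse [of ?P ?Q, OF this] show ?thesis
    unfolding Rset_def by (simp only: conj_assoc)
qed

theorem lemma7p5:
  fixes n :: nat
  assumes "n \<ge> 1"
  shows "(\<forall>\<omega>\<in>Omega n. \<forall>a\<in>univ (idx \<omega>). carr (prime \<omega>) a = 1 - carr \<omega> (neg a))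
       \<and> (\<forall>\<omega>1\<in>Omega n. \<forall>\<omega>2\<in>Omega n.
            preim \<omega>2 \<omega>1 = negset ((preim (prime \<omega>1) (prime \<omega>2))\<inverse>))
       \<and> (\<forall>\<omega>1\<in>Omega n. \<forall>\<omega>2\<in>Omega n.
            Rset n \<omega>2 \<omega>1 = converse ` Rset n (prime \<omega>1) (prime \<omega>2))"
  using carr_prime preim_eq_negset_converse_prime Rset_converse_prime by blast

end
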